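(* Let $f\in\mathcal A$ and suppose that $f$ does not have zero sums at $e$, i.e. there is $\mathbf n\in\mathbf L$ with $\sum_{l=0}^\infty f(s_{\mathbf n_l}s_{\mathbf n_l}^* )\neq0$. Then there exist $g,h\in\mathcal A$ with $g\#f\#h=\delta_e$.
   Context: Let $\mathrm{Cu}_2$ be the involutive monoid with identity $e$ and zero element $\lozenge$ (so $\lozenge t=\lozenge=t\lozenge$ for all $t$), generated by $s_1,s_2,s_1^*,s_2^*$ subject to $s_1^*s_1=e=s_2^*s_2$ and $s_1^*s_2=\lozenge=s_2^*s_1$, with involution $t\mapsto t^*$ satisfying $(t^* )^*=t$, $(tu)^*=u^*t^*$. Let $\mathbf I_0=\{\emptyset\}$, $\mathbf I_n=\{1,2\}^n$, $\mathbf I=\bigcup_{n\ge0}\mathbf I_n$ (finite words; concatenation written $\mathbf{ij}$), and $\mathbf L=\{1,2\}^{\mathbb N}$; for $\mathbf n=(n_1,n_2,\dots)\in\mathbf L$ put $\mathbf n_0=\emptyset$, $\mathbf n_l=(n_1,\dots,n_l)$. For $\mathbf i=(i_1,\dots,i_k)\in\mathbf I$ put $s_{\mathbf i}=s_{i_1}\cdots s_{i_k}$ ($s_\emptyset=e$) and $s_{\mathbf i}^*=(s_{\mathbf i})^*$. Every $t\in\mathrm{Cu}_2\setminus\{\lozenge\}$ can be written uniquely as $t=s_{\mathbf i}s_{\mathbf j}^*$ with $\mathbf i,\mathbf j\in\mathbf I$. Let $\mathcal A=\ell^1(\mathrm{Cu}_2\setminus\{\lozenge\})$ with product $\#$ determined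 by bilinearity and continuity from $\delta_s\#\delta_t=\delta_{st}$ if $st\neq\lozenge$ and $\delta_s\#\delta_t=0$ if $st=\lozenge$; this is a unital Banach $*$-algebra with unit $\delta_e$ and isometric involution $f^*(s)=\overline{f(s^* )}$. *)

theory Defs
  imports "HOL-Analysis.Analysis"
begin

datatype gen = G1 | G2

type_synonym word = "gen list"

text \<open>A nonzero element of Cu_2 is represented by its unique normal form
  s_i s_j^* , i.e. by the pair (i, j) of finite words.\<close>
type_synonym cu2 = "word \<times> word"

definition cu2_e :: cu2 where "cu2_e = ([], [])"

text \<open>Multiplication in Cu_2; None stands for the zero element.
  (s_i s_j^*)(s_k s_l^*) = s_i s_k' s_l^* if k = j k';
                         = s_i (s_l s_j')^* if j = k j';
                         = zero otherwise.\<close>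
definition cu2_mult :: "cu2 \<Rightarrow> cu2 \<Rightarrow> cu2 option" where
  "cu2_mult a b =
     (case a of (i, j) \<Rightarrow> case b of (k, l) \<Rightarrow>
        if (\<exists>k'. k = j @ k') then Some (i @ drop (length j) k, l)
        else if (\<exists>j'. j = k @ j') then Some (i, l @ drop (length k) j)
        else None)"

text \<open>Elements of the Banach algebra ell^1(Cu_2 minus zero).\<close>
definition in_A :: "(cu2 \<Rightarrow> complex) \<Rightarrow> bool" where
  "in_A f \<longleftrightarrow> (\<lambda>t. norm (f t)) summable_on UNIV"

definition conv :: "(cu2 \<Rightarrow> complex) \<Rightarrow> (cu2 \<Rightarrow> complex) \<Rightarrow> cu2 \<Rightarrow> complex"
  (infixl "#\<^sub>C" 70) where
  "conv f g t = (\<Sum>\<^sub>\<infinity>(s, u) \<in> UNIV. if cu2_mult s u = Some t then f s * g u else 0)"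

definition delta :: "cu2 \<Rightarrow> cu2 \<Rightarrow> complex" where
  "delta s = (\<lambda>t. if t = s then 1 else 0)"

text \<open>n_l = (n_1, ..., n_l) for an infinite word n (indexed from 0 here).\<close>
definition prefix_word :: "(nat \<Rightarrow> gen) \<Rightarrow> nat \<Rightarrow> word" where
  "prefix_word n l = map n [0..<l]"

end

(*
  Take u = n_L 1^L 2 for a large L and compress f by s_u, i.e. form s_u^* # f # s_u.
  A basis element s_i s_j^* with |i|, |j| <= L survives the compression only if
  i = j = n_l for some l <= L, and then it becomes e: since the final letter 2 of u
  is preceded by L letters 1, no suffix of u reoccurs in u after a shift by 1..L
  positions. So s_u^* # f # s_u = c_L e + r, where c_L is the L-th partial sum of
  the series in the hypothesis and the l1-norm of r is bounded by the mass of f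
  outside words of length <= L. For large L this gives |r| < |c_L|, so c_L e + r
  has a left inverse y (a Neumann series), and g = y # s_u^*, h = s_u.
*)

theory Submission
  imports Defs
begin

text \<open>Pushforwards are taken along partial maps, with None playing the role of the zero of
  Cu_2. The product # is the pushforward of the tensor product along multiplication, which
  reduces its algebra to that of pushforwards.\<close>

definition pushforward :: "('a \<Rightarrow> 'b option) \<Rightarrow> ('a \<Rightarrow> complex) \<Rightarrow> 'b \<Rightarrow> complex" where
  "pushforward \<phi> F t = (\<Sum>\<^sub>\<infinity>s. if \<phi> s = Some t then F s else 0)"

definition l1_norm :: "('a \<Rightarrow> complex) \<Rightarrow> real" where
  "l1_norm F = (\<Sum>\<^sub>\<infinity>s. norm (F s))"

lemma infsum_UNIV_single:
  assumes "\<And>x. x \<noteq> a \<Longrightarrow> F x = (0::'b::{comm_monoid_add,t2_space})"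
  shows "infsum F UNIV = F a"
proof -
  have "infsum F UNIV = infsum F {a}"
    by (rule infsum_cong_neutral) (use assms in auto)
  then show ?thesis by simp
qed

lemma summable_on_if_zero:
  fixes F :: "'a \<Rightarrow> 'b::banach"
  assumes "F summable_on UNIV"
  shows "(\<lambda>x. if P x then F x else 0) summable_on UNIV"
proof -
  have "F summable_on {x. P x}"
    using assms by (rule summable_on_subset_banach) simp
  moreover have "(\<lambda>x. if P x then F x else 0) summable_on UNIV \<longleftrightarrow> F summable_on {x. P x}"
    by (rule summable_on_cong_neutral) auto
  ultimately show ?thesis by simp
qed

lemma has_sum_graph_iff:
  "((\<lambda>(t, s). if \<phi> s = Some t then F s else 0) has_sum X) UNIV
   \<longleftrightarrow> (F has_sum X) {s. \<phi> s \<noteq> None}"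
proof -
  let ?G = "\<lambda>(t, s). if \<phi> s = Some t then F s else 0"
  let ?h = "\<lambda>s. (the (\<phi> s), s)"
  have "(?G has_sum X) UNIV \<longleftrightarrow> (?G has_sum X) (?h ` {s. \<phi> s \<noteq> None})"
  proof (rule has_sum_cong_neutral)
    fix x assume x: "x \<in> UNIV - ?h ` {s. \<phi> s \<noteq> None}"
    obtain t s where xts: "x = (t, s)" by (cases x)
    show "?G x = 0"
    proof (cases "\<phi> s = Some t")
      case True
      then have "x \<in> ?h ` {s. \<phi> s \<noteq> None}" using xts by (auto intro!: image_eqI[of _ _ s])
      then show ?thesis using x by blast
    qed (simp add: xts)
  qed auto
  also have "\<dots> \<longleftrightarrow> ((?G \<circ> ?h) has_sum X) {s. \<phi> s \<noteq> None}"
    by (rule has_sum_reindex) (auto simp: inj_on_def)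
  also have "\<dots> \<longleftrightarrow> (F has_sum X) {s. \<phi> s \<noteq> None}"
    by (rule has_sum_cong) auto
  finally show ?thesis .
qed

lemma summable_on_graph:
  fixes F :: "'a \<Rightarrow> 'b::banach"
  assumes "F summable_on UNIV"
  shows "(\<lambda>(t, s). if \<phi> s = Some t then F s else 0) summable_on UNIV"
    and "(\<Sum>\<^sub>\<infinity>(t, s). if \<phi> s = Some t then F s else 0) = infsum F {s. \<phi> s \<noteq> None}"
proof -
  have "F summable_on {s. \<phi> s \<noteq> None}"
    using assms by (rule summable_on_subset_banach) simp
  then have "((\<lambda>(t, s). if \<phi> s = Some t then F s else 0) has_sum infsum F {s. \<phi> s \<noteq> None}) UNIV"
    by (simp add: has_sum_graph_iff)
  then show "(\<lambda>(t, s). if \<phi> s = Some t then F s else 0) summable_on UNIV"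
    and "(\<Sum>\<^sub>\<infinity>(t, s). if \<phi> s = Some t then F s else 0) = infsum F {s. \<phi> s \<noteq> None}"
    by (auto simp: summable_on_def infsumI)
qed

lemma pushforward_summable:
  assumes "F summable_on UNIV"
  shows "pushforward \<phi> F summable_on UNIV"
  using summable_on_Sigma_banach[OF summable_on_graph(1)[OF assms, of \<phi>, unfolded UNIV_Times_UNIV[symmetric]]]
  by (simp add: pushforward_def[abs_def])

lemma l1_norm_pushforward_le:
  assumes F: "F summable_on UNIV"
  shows "l1_norm (pushforward \<phi> F) \<le> l1_norm F"
proof -
  let ?N = "\<lambda>t s. if \<phi> s = Some t then norm (F s) else 0"
  have nF: "(\<lambda>s. norm (F s)) summable_on UNIV"
    using F summable_on_iff_abs_summable_on_complex by blast
  have N: "(\<lambda>(t, s). ?N t s) summable_on UNIV \<times> UNIV"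
    using summable_on_graph(1)[OF nF, of \<phi>] by simp
  have "norm (pushforward \<phi> F t) \<le> (\<Sum>\<^sub>\<infinity>s. ?N t s)" for t
  proof -
    have "?N t summable_on UNIV"
      using summable_on_SigmaD1[OF N[unfolded UNIV_Times_UNIV[symmetric]]] by simp
    then have "(\<lambda>s. norm (if \<phi> s = Some t then F s else 0)) summable_on UNIV"
      by (rule summable_on_cong[THEN iffD1, rotated]) simp
    then have "norm (pushforward \<phi> F t) \<le> (\<Sum>\<^sub>\<infinity>s. norm (if \<phi> s = Some t then F s else 0))"
      unfolding pushforward_def by (rule norm_infsum_bound)
    also have "\<dots> = (\<Sum>\<^sub>\<infinity>s. ?N t s)"
      by (rule infsum_cong) simp
    finally show ?thesis .
  qed
  then have "l1_norm (pushforward \<phi> F) \<le> (\<Sum>\<^sub>\<infinity>t. \<Sum>\<^sub>\<infinity>s. ?N t s)"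
    unfolding l1_norm_def
    using pushforward_summable[OF F] summable_on_Sigma_banach[OF N[unfolded UNIV_Times_UNIV[symmetric]]]
    by (intro infsum_mono) (auto simp: summable_on_iff_abs_summable_on_complex)
  also have "\<dots> = (\<Sum>\<^sub>\<infinity>(t, s). ?N t s)"
    using infsum_Sigma'_banach[OF N[unfolded UNIV_Times_UNIV[symmetric]]] by simp
  also have "\<dots> = infsum (\<lambda>s. norm (F s)) {s. \<phi> s \<noteq> None}"
    by (rule summable_on_graph(2)[OF nF])
  also have "\<dots> \<le> l1_norm F"
    unfolding l1_norm_def
    using nF summable_on_subset_banach[OF nF, of "{s. \<phi> s \<noteq> None}"]
    by (intro infsum_mono_neutral) auto
  finally show ?thesis .
qed

lemma pushforward_add:
  assumes "F summable_on UNIV" "G summable_on UNIV"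
  shows "pushforward \<phi> (\<lambda>s. F s + G s) t = pushforward \<phi> F t + pushforward \<phi> G t"
proof -
  have "pushforward \<phi> (\<lambda>s. F s + G s) t
      = (\<Sum>\<^sub>\<infinity>s. (if \<phi> s = Some t then F s else 0) + (if \<phi> s = Some t then G s else 0))"
    unfolding pushforward_def by (rule infsum_cong) simp
  also have "\<dots> = pushforward \<phi> F t + pushforward \<phi> G t"
    unfolding pushforward_def using assms by (intro infsum_add summable_on_if_zero)
  finally show ?thesis .
qed

lemma pushforward_cmult: "pushforward \<phi> (\<lambda>s. c * F s) t = c * pushforward \<phi> F t"
proof -
  have "pushforward \<phi> (\<lambda>s. c * F s) t = (\<Sum>\<^sub>\<infinity>s. c * (if \<phi> s = Some t then F s else 0))"
    unfolding pushforward_def by (rule infsum_cong) simp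
  also have "\<dots> = c * pushforward \<phi> F t"
    unfolding pushforward_def by (rule infsum_cmult_right')
  finally show ?thesis .
qed

lemma pushforward_pushforward:
  assumes F: "F summable_on UNIV"
  shows "pushforward \<psi> (pushforward \<phi> F) t = pushforward (\<lambda>s. Option.bind (\<phi> s) \<psi>) F t"
proof -
  let ?H = "\<lambda>p s. if \<psi> p = Some t then if \<phi> s = Some p then F s else 0 else 0"
  have H: "(\<lambda>(p, s). ?H p s) summable_on UNIV"
    using summable_on_if_zero[OF summable_on_graph(1)[OF F, of \<phi>], of "\<lambda>(p, s). \<psi> p = Some t"]
    by (rule summable_on_cong[THEN iffD1, rotated]) auto
  have "pushforward \<psi> (pushforward \<phi> F) t = (\<Sum>\<^sub>\<infinity>p. \<Sum>\<^sub>\<infinity>s. ?H p s)"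
    unfolding pushforward_def by (rule infsum_cong) simp
  also have "\<dots> = (\<Sum>\<^sub>\<infinity>s. \<Sum>\<^sub>\<infinity>p. ?H p s)"
    by (rule infsum_swap_banach[OF H[unfolded UNIV_Times_UNIV[symmetric]]])
  also have "\<dots> = pushforward (\<lambda>s. Option.bind (\<phi> s) \<psi>) F t"
    unfolding pushforward_def
  proof (rule infsum_cong)
    fix s
    show "(\<Sum>\<^sub>\<infinity>p. ?H p s) = (if Option.bind (\<phi> s) \<psi> = Some t then F s else 0)"
    proof (cases "\<phi> s")
      case (Some p0)
      then show ?thesis by (subst infsum_UNIV_single[where a = p0]) auto
    qed (simp add: infsum_0)
  qed
  finally show ?thesis .
qed

lemma pushforward_reindex:
  assumes "bij \<sigma>"
  shows "pushforward (\<lambda>x. \<phi> (\<sigma> x)) (\<lambda>x. F (\<sigma> x)) = pushforward \<phi> F"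
proof
  fix t
  show "pushforward (\<lambda>x. \<phi> (\<sigma> x)) (\<lambda>x. F (\<sigma> x)) t = pushforward \<phi> F t"
    unfolding pushforward_def
    using infsum_reindex_bij_betw[OF assms, of "\<lambda>y. if \<phi> y = Some t then F y else 0"] by simp
qed

lemma pushforward_Some: "pushforward Some F = F"
proof
  fix t
  show "pushforward Some F t = F t"
    unfolding pushforward_def by (subst infsum_UNIV_single[where a = t]) auto
qed

text \<open>s_i s_j^* acts on words by j z \<mapsto> i z. This partial action is multiplicative and
  faithful, so associativity of Cu_2 is inherited from composition of partial maps.\<close>

definition cu2_act :: "cu2 option \<Rightarrow> word \<Rightarrow> word option" where
  "cu2_act x w = (case x of None \<Rightarrow> None
     | Some (i, j) \<Rightarrow> if \<exists>z. w = j @ z then Some (i @ drop (length j) w) else None)"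

lemma cu2_act_None [simp]: "cu2_act None = (\<lambda>_. None)"
  by (simp add: cu2_act_def fun_eq_iff)

lemma cu2_act_mult: "Option.bind (cu2_act (Some b) w) (cu2_act (Some a)) = cu2_act (cu2_mult a b) w"
proof -
  obtain i j k l where ab: "a = (i, j)" "b = (k, l)" by (cases a, cases b)
  consider (extends) k' where "k = j @ k'" | (prefix) j' where "j = k @ j'" "\<nexists>k'. k = j @ k'"
    | (apart) "\<nexists>k'. k = j @ k'" "\<nexists>j'. j = k @ j'"
    by blast
  then show ?thesis
  proof cases
    case extends
    then show ?thesis by (auto simp: ab cu2_act_def cu2_mult_def)
  next
    case prefix
    then show ?thesis by (auto simp: ab cu2_act_def cu2_mult_def append_eq_append_conv2)
  next
    case apart
    then show ?thesis by (auto simp: ab cu2_act_def cu2_mult_def append_eq_append_conv2)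
  qed
qed

lemma cu2_act_inj: "inj cu2_act"
proof (rule injI)
  fix x y assume eq: "cu2_act x = cu2_act y"
  have defined: "cu2_act (Some a) (snd a) \<noteq> None" for a
    by (cases a) (auto simp: cu2_act_def)
  show "x = y"
  proof (cases "x = None \<or> y = None")
    case True
    then show ?thesis
      using eq defined by (metis cu2_act_None option.exhaust)
  next
    case False
    then obtain a b where xy: "x = Some a" "y = Some b" by auto
    obtain i j k l where ab: "a = (i, j)" "b = (k, l)" by (cases a, cases b)
    have e: "cu2_act (Some (i, j)) w = cu2_act (Some (k, l)) w" for w
      using eq xy ab by simp
    from e[of j] e[of l] have "j = l"
      by (auto simp: cu2_act_def split: if_splits)
    with e[of j] have "i = k"
      by (auto simp: cu2_act_def)
    with \<open>j = l\<close> show ?thesis using xy ab by simp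
  qed
qed

lemma cu2_mult_assoc:
  "Option.bind (cu2_mult s u) (\<lambda>p. cu2_mult p v) = Option.bind (cu2_mult u v) (cu2_mult s)"
proof (rule injD[OF cu2_act_inj], rule ext)
  fix w
  have left: "cu2_act (Option.bind x (\<lambda>p. cu2_mult p v)) w = Option.bind (cu2_act (Some v) w) (cu2_act x)" for x
    by (cases x) (simp_all add: cu2_act_mult[symmetric] split: Option.bind_splits)
  have right: "cu2_act (Option.bind x (cu2_mult s)) w = Option.bind (cu2_act x w) (cu2_act (Some s))" for x
    by (cases x) (simp_all add: cu2_act_mult[symmetric] split: Option.bind_splits)
  show "cu2_act (Option.bind (cu2_mult s u) (\<lambda>p. cu2_mult p v)) w
      = cu2_act (Option.bind (cu2_mult u v) (cu2_mult s)) w"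
    unfolding left right cu2_act_mult[symmetric]
    by (cases "cu2_act (Some v) w") (simp_all add: cu2_act_mult[symmetric])
qed

lemma cu2_mult_e_right: "cu2_mult s cu2_e = Some s"
  by (cases s) (auto simp: cu2_mult_def cu2_e_def)

definition tensor :: "('a \<Rightarrow> complex) \<Rightarrow> ('b \<Rightarrow> complex) \<Rightarrow> 'a \<times> 'b \<Rightarrow> complex" where
  "tensor f g x = f (fst x) * g (snd x)"

lemma conv_eq_pushforward: "conv f g = pushforward (case_prod cu2_mult) (tensor f g)"
proof
  fix t
  show "conv f g t = pushforward (case_prod cu2_mult) (tensor f g) t"
    unfolding conv_def pushforward_def tensor_def by (rule infsum_cong) (simp add: case_prod_beta)
qed

lemma l1_norm_nonneg: "l1_norm F \<ge> 0"
  unfolding l1_norm_def by (rule infsum_nonneg) simp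

lemma l1_norm_cmult: "l1_norm (\<lambda>t. c * F t) = norm c * l1_norm F"
  unfolding l1_norm_def norm_mult by (rule infsum_cmult_right')

lemma norm_le_l1_norm:
  assumes "F summable_on UNIV"
  shows "norm (F t) \<le> l1_norm F"
proof -
  have "(\<lambda>s. norm (F s)) summable_on UNIV"
    using assms summable_on_iff_abs_summable_on_complex by blast
  then have "infsum (\<lambda>s. norm (F s)) {t} \<le> l1_norm F"
    unfolding l1_norm_def by (intro infsum_mono_neutral) auto
  then show ?thesis by simp
qed

lemma delta_summable: "delta a summable_on UNIV"
proof -
  have "delta a summable_on UNIV \<longleftrightarrow> delta a summable_on {a}"
    by (rule summable_on_cong_neutral) (auto simp: delta_def)
  then show ?thesis by simp
qed

lemma l1_norm_delta: "l1_norm (delta a) = 1"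
  unfolding l1_norm_def by (subst infsum_UNIV_single[where a = a]) (auto simp: delta_def)

lemma tensor_summable:
  assumes f: "f summable_on UNIV" and g: "g summable_on UNIV"
  shows "tensor f g summable_on UNIV"
    and "l1_norm (tensor f g) = l1_norm f * l1_norm g"
proof -
  have nf: "(\<lambda>s. norm (f s)) summable_on UNIV" and ng: "(\<lambda>u. norm (g u)) summable_on UNIV"
    using f g summable_on_iff_abs_summable_on_complex by blast+
  have row: "(\<Sum>\<^sub>\<infinity>u. norm (tensor f g (s, u))) = norm (f s) * l1_norm g" for s
    unfolding l1_norm_def tensor_def norm_mult by (simp add: infsum_cmult_right')
  have "(\<lambda>x. norm (tensor f g x)) summable_on Sigma UNIV (\<lambda>_. UNIV)"
    unfolding Infinite_Sum.abs_summable_on_Sigma_iff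
  proof (intro conjI ballI)
    show "(\<lambda>u. norm (tensor f g (s, u))) summable_on UNIV" for s
      unfolding tensor_def norm_mult by (simp add: summable_on_cmult_right[OF ng])
    show "(\<lambda>s. norm (\<Sum>\<^sub>\<infinity>u. norm (tensor f g (s, u)))) summable_on UNIV"
      unfolding row using summable_on_cmult_left[OF nf, of "l1_norm g"]
      by (simp add: l1_norm_nonneg abs_mult)
  qed
  then have abs: "(\<lambda>x. norm (tensor f g x)) summable_on UNIV" by simp
  then show "tensor f g summable_on UNIV"
    using summable_on_iff_abs_summable_on_complex by blast
  have "(\<Sum>\<^sub>\<infinity>s. \<Sum>\<^sub>\<infinity>u. norm (tensor f g (s, u))) = (\<Sum>\<^sub>\<infinity>(s, u)\<in>UNIV \<times> UNIV. norm (tensor f g (s, u)))"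
    by (rule infsum_Sigma'_banach) (unfold UNIV_Times_UNIV, rule abs[THEN summable_on_cong[THEN iffD1, rotated]], auto)
  moreover have "l1_norm (tensor f g) = (\<Sum>\<^sub>\<infinity>(s, u). norm (tensor f g (s, u)))"
    unfolding l1_norm_def by (rule infsum_cong) auto
  ultimately have "l1_norm (tensor f g) = (\<Sum>\<^sub>\<infinity>s. \<Sum>\<^sub>\<infinity>u. norm (tensor f g (s, u)))"
    by simp
  also have "\<dots> = l1_norm f * l1_norm g"
    unfolding row l1_norm_def by (rule infsum_cmult_left')
  finally show "l1_norm (tensor f g) = l1_norm f * l1_norm g" .
qed

lemma conv_summable:
  assumes "f summable_on UNIV" "g summable_on UNIV"
  shows "conv f g summable_on UNIV"
  unfolding conv_eq_pushforward by (intro pushforward_summable tensor_summable assms)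

lemma l1_norm_conv_le:
  assumes "f summable_on UNIV" "g summable_on UNIV"
  shows "l1_norm (conv f g) \<le> l1_norm f * l1_norm g"
  unfolding conv_eq_pushforward tensor_summable(2)[OF assms, symmetric]
  by (intro l1_norm_pushforward_le tensor_summable assms)

lemma conv_add_right:
  assumes "f summable_on UNIV" "g summable_on UNIV" "h summable_on UNIV"
  shows "conv f (\<lambda>t. g t + h t) t = conv f g t + conv f h t"
proof -
  have "tensor f (\<lambda>t. g t + h t) = (\<lambda>x. tensor f g x + tensor f h x)"
    by (simp add: fun_eq_iff tensor_def distrib_left)
  then show ?thesis
    unfolding conv_eq_pushforward by (simp add: pushforward_add tensor_summable assms)
qed

lemma conv_cmult_right: "conv f (\<lambda>t. c * g t) t = c * conv f g t"
proof -
  have "tensor f (\<lambda>t. c * g t) = (\<lambda>x. c * tensor f g x)"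
    by (simp add: fun_eq_iff tensor_def ac_simps)
  then show ?thesis
    unfolding conv_eq_pushforward by (simp add: pushforward_cmult)
qed

lemma conv_delta_right: "conv f (delta b) = pushforward (\<lambda>s. cu2_mult s b) f"
proof
  fix t
  have "conv f (delta b) t
      = (\<Sum>\<^sub>\<infinity>x\<in>range (\<lambda>s. (s, b)). if case_prod cu2_mult x = Some t then tensor f (delta b) x else 0)"
    unfolding conv_eq_pushforward pushforward_def
    by (rule infsum_cong_neutral) (auto simp: delta_def tensor_def)
  also have "\<dots> = pushforward (\<lambda>s. cu2_mult s b) f t"
    unfolding pushforward_def
    by (subst infsum_reindex) (simp_all add: inj_on_def o_def tensor_def delta_def cong: if_cong)
  finally show "conv f (delta b) t = pushforward (\<lambda>s. cu2_mult s b) f t" .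
qed

lemma conv_delta_left: "conv (delta a) g = pushforward (cu2_mult a) g"
proof
  fix t
  have "conv (delta a) g t
      = (\<Sum>\<^sub>\<infinity>x\<in>range (\<lambda>u. (a, u)). if case_prod cu2_mult x = Some t then tensor (delta a) g x else 0)"
    unfolding conv_eq_pushforward pushforward_def
    by (rule infsum_cong_neutral) (auto simp: delta_def tensor_def)
  also have "\<dots> = pushforward (cu2_mult a) g t"
    unfolding pushforward_def
    by (subst infsum_reindex) (simp_all add: inj_on_def o_def tensor_def delta_def cong: if_cong)
  finally show "conv (delta a) g t = pushforward (cu2_mult a) g t" .
qed

lemma conv_delta_e_right: "conv f (delta cu2_e) = f"
  unfolding conv_delta_right cu2_mult_e_right by (rule pushforward_Some)

lemma tensor_pushforward_left:
  "tensor (pushforward \<phi> F) h = pushforward (\<lambda>(x, v). map_option (\<lambda>p. (p, v)) (\<phi> x)) (tensor F h)"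
proof
  fix y
  show "tensor (pushforward \<phi> F) h y = pushforward (\<lambda>(x, v). map_option (\<lambda>p. (p, v)) (\<phi> x)) (tensor F h) y"
  proof (cases y)
    case (Pair p v)
    have "pushforward (\<lambda>(x, v). map_option (\<lambda>p. (p, v)) (\<phi> x)) (tensor F h) (p, v)
        = (\<Sum>\<^sub>\<infinity>z\<in>range (\<lambda>s. (s, v)). if (case z of (x, v) \<Rightarrow> map_option (\<lambda>p. (p, v)) (\<phi> x)) = Some (p, v)
             then tensor F h z else 0)"
      unfolding pushforward_def by (rule infsum_cong_neutral) auto
    also have "\<dots> = (\<Sum>\<^sub>\<infinity>s. (if \<phi> s = Some p then F s else 0) * h v)"
      by (subst infsum_reindex) (auto simp: inj_on_def tensor_def intro!: infsum_cong)
    also have "\<dots> = tensor (pushforward \<phi> F) h (p, v)"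
      unfolding pushforward_def tensor_def by (simp add: infsum_cmult_left')
    finally show ?thesis
      unfolding Pair by simp
  qed
qed

lemma tensor_pushforward_right:
  "tensor h (pushforward \<phi> F) = pushforward (\<lambda>(v, x). map_option (\<lambda>p. (v, p)) (\<phi> x)) (tensor h F)"
proof
  fix y
  show "tensor h (pushforward \<phi> F) y = pushforward (\<lambda>(v, x). map_option (\<lambda>p. (v, p)) (\<phi> x)) (tensor h F) y"
  proof (cases y)
    case (Pair v p)
    have "pushforward (\<lambda>(v, x). map_option (\<lambda>p. (v, p)) (\<phi> x)) (tensor h F) (v, p)
        = (\<Sum>\<^sub>\<infinity>z\<in>range (\<lambda>s. (v, s)). if (case z of (v, x) \<Rightarrow> map_option (\<lambda>p. (v, p)) (\<phi> x)) = Some (v, p)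
             then tensor h F z else 0)"
      unfolding pushforward_def by (rule infsum_cong_neutral) auto
    also have "\<dots> = (\<Sum>\<^sub>\<infinity>s. h v * (if \<phi> s = Some p then F s else 0))"
      by (subst infsum_reindex) (auto simp: inj_on_def tensor_def intro!: infsum_cong)
    also have "\<dots> = tensor h (pushforward \<phi> F) (v, p)"
      unfolding pushforward_def tensor_def by (simp add: infsum_cmult_right')
    finally show ?thesis
      unfolding Pair by simp
  qed
qed

lemma conv_assoc:
  assumes f: "f summable_on UNIV" and g: "g summable_on UNIV" and h: "h summable_on UNIV"
  shows "conv (conv f g) h = conv f (conv g h)"
proof
  fix t
  let ?M = "case_prod cu2_mult"
  let ?\<psi>L = "\<lambda>(x, v). map_option (\<lambda>p. (p, v)) (?M x)"
  let ?\<psi>R = "\<lambda>(s, x). map_option (\<lambda>p. (s, p)) (?M x)"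
  let ?\<alpha> = "\<lambda>(s, u, v). ((s, u), v)"
  have bij: "bij ?\<alpha>"
    by (rule bij_betw_byWitness[where f' = "\<lambda>((s, u), v). (s, u, v)"]) auto
  have bind_left: "Option.bind (map_option (\<lambda>p. (p, v)) x) ?M = Option.bind x (\<lambda>p. cu2_mult p v)" for x v
    by (cases x) simp_all
  have bind_right: "Option.bind (map_option (\<lambda>p. (s, p)) x) ?M = Option.bind x (cu2_mult s)" for x s
    by (cases x) simp_all
  have mult: "Option.bind (?\<psi>L (?\<alpha> z)) ?M = Option.bind (?\<psi>R z) ?M" for z :: "cu2 \<times> cu2 \<times> cu2"
    by (cases z) (simp add: bind_left bind_right cu2_mult_assoc)
  have coeff: "tensor (tensor f g) h (?\<alpha> z) = tensor f (tensor g h) z" for z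
    by (cases z) (simp add: tensor_def mult.assoc)
  have "conv (conv f g) h t = pushforward (\<lambda>z. Option.bind (?\<psi>L z) ?M) (tensor (tensor f g) h) t"
    unfolding conv_eq_pushforward tensor_pushforward_left
    by (intro pushforward_pushforward tensor_summable f g h)
  also have "\<dots> = pushforward (\<lambda>z. Option.bind (?\<psi>L (?\<alpha> z)) ?M) (\<lambda>z. tensor (tensor f g) h (?\<alpha> z)) t"
    unfolding pushforward_reindex[OF bij, of "\<lambda>z. Option.bind (?\<psi>L z) ?M" "tensor (tensor f g) h"] ..
  also have "\<dots> = pushforward (\<lambda>z. Option.bind (?\<psi>R z) ?M) (tensor f (tensor g h)) t"
    unfolding mult coeff ..
  also have "\<dots> = conv f (conv g h) t"
    unfolding conv_eq_pushforward tensor_pushforward_right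
    by (intro pushforward_pushforward[symmetric] tensor_summable f g h)
  finally show "conv (conv f g) h t = conv f (conv g h) t" .
qed

lemma summable_on_family:
  fixes a :: "'i \<Rightarrow> 'a \<Rightarrow> complex"
  assumes a: "\<And>n. a n summable_on UNIV" and l1: "(\<lambda>n. l1_norm (a n)) summable_on UNIV"
  shows "(\<lambda>(n, t). a n t) summable_on UNIV"
proof -
  have "(\<lambda>z. norm ((\<lambda>(n, t). a n t) z)) summable_on Sigma UNIV (\<lambda>_. UNIV)"
    unfolding Infinite_Sum.abs_summable_on_Sigma_iff
  proof (intro conjI ballI)
    show "(\<lambda>t. norm ((\<lambda>(n, t). a n t) (n, t))) summable_on UNIV" for n
      using a[of n] by (simp add: summable_on_iff_abs_summable_on_complex[symmetric])
    show "(\<lambda>n. norm (\<Sum>\<^sub>\<infinity>t. norm ((\<lambda>(n, t). a n t) (n, t)))) summable_on UNIV"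
      using l1 by (simp add: l1_norm_def infsum_nonneg)
  qed
  then show ?thesis
    by (subst summable_on_iff_abs_summable_on_complex) simp
qed

lemma summable_on_infsum_family:
  fixes a :: "'i \<Rightarrow> 'a \<Rightarrow> complex"
  assumes a: "\<And>n. a n summable_on UNIV" and l1: "(\<lambda>n. l1_norm (a n)) summable_on UNIV"
  shows "(\<lambda>t. \<Sum>\<^sub>\<infinity>n. a n t) summable_on UNIV"
proof -
  have "(\<lambda>(t, n). a n t) summable_on UNIV \<times> UNIV"
    using summable_on_swap[of "\<lambda>(n, t). a n t" UNIV UNIV] summable_on_family[OF a l1]
    by (simp add: case_prod_beta)
  then show ?thesis
    using summable_on_Sigma_banach[of "\<lambda>t n. a n t" UNIV "\<lambda>_. UNIV"] by simp
qed

lemma conv_infsum_left: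
  assumes a: "\<And>n. a n summable_on UNIV" and l1: "(\<lambda>n. l1_norm (a n)) summable_on UNIV"
    and x: "x summable_on UNIV"
  shows "(\<lambda>n. conv (a n) x t) summable_on UNIV"
    and "conv (\<lambda>s. \<Sum>\<^sub>\<infinity>n. a n s) x t = (\<Sum>\<^sub>\<infinity>n. conv (a n) x t)"
proof -
  let ?K = "\<lambda>n z. if case_prod cu2_mult z = Some t then tensor (a n) x z else 0"
  have "(\<lambda>n. l1_norm (tensor (a n) x)) summable_on UNIV"
    using summable_on_cmult_left[OF l1, of "l1_norm x"] by (simp add: tensor_summable(2) a x)
  then have "(\<lambda>(n, z). tensor (a n) x z) summable_on UNIV"
    by (intro summable_on_family tensor_summable a x)
  then have K: "(\<lambda>(n, z). ?K n z) summable_on UNIV \<times> UNIV"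
    using summable_on_if_zero[of _ "\<lambda>(n, z). case_prod cu2_mult z = Some t"]
    by (simp add: case_prod_unfold)
  have row: "(\<Sum>\<^sub>\<infinity>z. ?K n z) = conv (a n) x t" for n
    by (simp add: conv_eq_pushforward pushforward_def)
  show "(\<lambda>n. conv (a n) x t) summable_on UNIV"
    using summable_on_Sigma_banach[OF K] by (simp add: row)
  have "conv (\<lambda>s. \<Sum>\<^sub>\<infinity>n. a n s) x t = (\<Sum>\<^sub>\<infinity>z. \<Sum>\<^sub>\<infinity>n. ?K n z)"
    unfolding conv_eq_pushforward pushforward_def tensor_def
    by (rule infsum_cong) (simp add: infsum_cmult_left')
  also have "\<dots> = (\<Sum>\<^sub>\<infinity>n. \<Sum>\<^sub>\<infinity>z. ?K n z)"
    by (rule infsum_swap_banach[OF K, symmetric])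
  finally show "conv (\<lambda>s. \<Sum>\<^sub>\<infinity>n. a n s) x t = (\<Sum>\<^sub>\<infinity>n. conv (a n) x t)"
    by (simp add: row)
qed

lemma conv_infsum_telescoping:
  assumes a: "\<And>n. a n summable_on UNIV" and l1: "(\<lambda>n. l1_norm (a n)) summable_on UNIV"
    and x: "x summable_on UNIV"
    and step: "\<And>n t. conv (a n) x t = k * (a n t - a (Suc n) t)"
  shows "conv (\<lambda>t. \<Sum>\<^sub>\<infinity>n. a n t) x = (\<lambda>t. k * a 0 t)"
proof
  fix t
  have "(\<lambda>n. l1_norm (a n)) \<longlonglongrightarrow> 0"
    using l1 l1_norm_nonneg
    by (intro summable_LIMSEQ_zero summable_on_imp_summable) auto
  then have "(\<lambda>n. a n t) \<longlonglongrightarrow> 0"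
    by (rule Lim_null_comparison[rotated]) (simp add: norm_le_l1_norm a)
  then have "(\<lambda>n. k * (a n t - a (Suc n) t)) sums (k * (a 0 t - 0))"
    by (intro sums_mult telescope_sums')
  moreover have "(\<lambda>n. k * (a n t - a (Suc n) t)) sums (\<Sum>\<^sub>\<infinity>n. conv (a n) x t)"
    unfolding step[symmetric] using conv_infsum_left(1)[OF a l1 x]
    by (intro has_sum_imp_sums) simp
  ultimately show "conv (\<lambda>t. \<Sum>\<^sub>\<infinity>n. a n t) x t = k * a 0 t"
    by (simp add: conv_infsum_left(2)[OF a l1 x] sums_unique2)
qed

lemma funpow_conv_right:
  assumes a0: "a0 summable_on UNIV" and \<rho>: "\<rho> summable_on UNIV"
  shows "((\<lambda>b. conv b \<rho>) ^^ n) a0 summable_on UNIV"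
    and "l1_norm (((\<lambda>b. conv b \<rho>) ^^ n) a0) \<le> l1_norm a0 * l1_norm \<rho> ^ n"
proof -
  have "((\<lambda>b. conv b \<rho>) ^^ n) a0 summable_on UNIV
    \<and> l1_norm (((\<lambda>b. conv b \<rho>) ^^ n) a0) \<le> l1_norm a0 * l1_norm \<rho> ^ n"
  proof (induction n)
    case 0
    then show ?case using a0 by simp
  next
    case (Suc n)
    let ?a = "((\<lambda>b. conv b \<rho>) ^^ n) a0"
    have "l1_norm (conv ?a \<rho>) \<le> l1_norm ?a * l1_norm \<rho>"
      using Suc \<rho> by (intro l1_norm_conv_le) auto
    also have "\<dots> \<le> l1_norm a0 * l1_norm \<rho> ^ n * l1_norm \<rho>"
      using Suc l1_norm_nonneg by (intro mult_right_mono) auto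
    finally show ?case
      using Suc \<rho> by (simp add: conv_summable ac_simps)
  qed
  then show "((\<lambda>b. conv b \<rho>) ^^ n) a0 summable_on UNIV"
    and "l1_norm (((\<lambda>b. conv b \<rho>) ^^ n) a0) \<le> l1_norm a0 * l1_norm \<rho> ^ n"
    by auto
qed

lemma neumann_left_inverse:
  fixes r :: "cu2 \<Rightarrow> complex"
  assumes r: "r summable_on UNIV" and small: "l1_norm r < norm c"
  shows "\<exists>y. y summable_on UNIV \<and> conv y (\<lambda>t. c * delta cu2_e t + r t) = delta cu2_e"
proof -
  have c: "c \<noteq> 0"
    using small l1_norm_nonneg[of r] by auto
  define \<rho> where "\<rho> = (\<lambda>t. (- 1 / c) * r t)"
  define a0 where "a0 = (\<lambda>t. (1 / c) * delta cu2_e t)"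
  define a where "a n = ((\<lambda>b. conv b \<rho>) ^^ n) a0" for n
  define x where "x = (\<lambda>t. c * delta cu2_e t + r t)"
  have \<rho>: "\<rho> summable_on UNIV"
    unfolding \<rho>_def by (rule summable_on_cmult_right[OF r])
  have \<rho>_small: "l1_norm \<rho> < 1"
    unfolding \<rho>_def l1_norm_cmult using small c by (simp add: norm_divide divide_less_eq)
  have a0: "a0 summable_on UNIV"
    unfolding a0_def by (rule summable_on_cmult_right[OF delta_summable])
  have a: "a n summable_on UNIV" for n
    unfolding a_def by (rule funpow_conv_right(1)[OF a0 \<rho>])
  have l1: "(\<lambda>n. l1_norm (a n)) summable_on UNIV"
  proof (rule summable_on_comparison_test)
    show "(\<lambda>n. l1_norm a0 * l1_norm \<rho> ^ n) summable_on UNIV"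
      using \<rho>_small l1_norm_nonneg[of \<rho>] l1_norm_nonneg[of a0]
      by (intro summable_nonneg_imp_summable_on summable_mult summable_geometric) auto
  qed (use funpow_conv_right(2)[OF a0 \<rho>] l1_norm_nonneg in \<open>auto simp: a_def\<close>)
  have x: "x summable_on UNIV"
    unfolding x_def using r by (intro summable_on_add summable_on_cmult_right delta_summable)
  have step: "conv (a n) x t = c * (a n t - a (Suc n) t)" for n t
  proof -
    have "conv (a n) x t = c * a n t + conv (a n) r t"
      unfolding x_def using a r
      by (simp add: conv_add_right summable_on_cmult_right delta_summable conv_cmult_right conv_delta_e_right)
    also have "conv (a n) r t = - c * a (Suc n) t"
      unfolding a_def funpow.simps o_apply \<rho>_def conv_cmult_right using c by simp
    finally show ?thesis
      by (simp add: algebra_simps)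
  qed
  have "conv (\<lambda>t. \<Sum>\<^sub>\<infinity>n. a n t) x = delta cu2_e"
    using conv_infsum_telescoping[OF a l1 x step] c by (simp add: a_def a0_def)
  then show ?thesis
    using summable_on_infsum_family[OF a l1] unfolding x_def by blast
qed

definition probe_word :: "(nat \<Rightarrow> gen) \<Rightarrow> nat \<Rightarrow> word" where
  "probe_word n L = prefix_word n L @ replicate L G1 @ [G2]"

text \<open>As (i, j) stands for s_i s_j^*, the point masses at ([], u) and (u, []) are s_u^* and s_u,
  and compress n L s is s_u^* s s_u for u = probe_word n L.\<close>

definition compress :: "(nat \<Rightarrow> gen) \<Rightarrow> nat \<Rightarrow> cu2 \<Rightarrow> cu2 option" where
  "compress n L s = Option.bind (cu2_mult ([], probe_word n L) s) (\<lambda>p. cu2_mult p (probe_word n L, []))"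

lemma length_prefix_word [simp]: "length (prefix_word n l) = l"
  by (simp add: prefix_word_def)

lemma length_probe_word: "length (probe_word n L) = 2 * L + 1"
  by (simp add: probe_word_def)

lemma take_probe_word: "l \<le> L \<Longrightarrow> take l (probe_word n L) = prefix_word n l"
  by (simp add: probe_word_def prefix_word_def take_map)

lemma probe_word_last: "probe_word n L ! (length (probe_word n L) - 1) = G2"
  by (simp add: probe_word_def nth_append)

lemma probe_word_before_last:
  assumes "1 \<le> d" "d \<le> L"
  shows "probe_word n L ! (length (probe_word n L) - 1 - d) = G1"
proof -
  have "length (probe_word n L) - 1 - d = length (prefix_word n L) + (L - d)"
    using assms by (simp add: length_probe_word)
  moreover have "probe_word n L ! (length (prefix_word n L) + (L - d)) = G1"
    unfolding probe_word_def nth_append_length_plus using assms by (simp add: nth_append)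
  ultimately show ?thesis by simp
qed

lemma probe_word_suffix_no_repeat:
  assumes u1: "probe_word n L = i @ v" and u2: "probe_word n L = j @ v @ w"
    and "w \<noteq> []" and "length i \<le> L"
  shows False
proof -
  let ?u = "probe_word n L"
  define d where "d = length w"
  have lengths: "length i = length j + d" "0 < length v"
    using arg_cong[OF u1, of length] arg_cong[OF u2, of length] \<open>length i \<le> L\<close>
    by (auto simp: d_def length_probe_word)
  have d: "1 \<le> d" "d \<le> L"
    using \<open>w \<noteq> []\<close> lengths \<open>length i \<le> L\<close> by (auto simp: d_def Suc_le_eq)
  have "?u ! (length i + (length v - 1)) = v ! (length v - 1)"
    unfolding u1 by (rule nth_append_length_plus)
  moreover have "length ?u - 1 = length i + (length v - 1)"
    using arg_cong[OF u1, of length] lengths(2) unfolding length_append by linarith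
  moreover have "?u ! (length j + (length v - 1)) = (v @ w) ! (length v - 1)"
    unfolding u2 by (rule nth_append_length_plus)
  moreover have "length ?u - 1 - d = length j + (length v - 1)"
    using arg_cong[OF u2, of length] lengths(2) unfolding length_append d_def by linarith
  ultimately have "?u ! (length ?u - 1) = ?u ! (length ?u - 1 - d)"
    using lengths(2) by (simp add: nth_append)
  then show False
    using probe_word_last[of n L] probe_word_before_last[OF d, of n] by simp
qed

lemma probe_word_suffix_no_overhang:
  assumes u1: "probe_word n L = i @ v" and u2: "j @ v = probe_word n L @ w"
    and "w \<noteq> []" and "length j \<le> L"
  shows False
proof -
  let ?u = "probe_word n L"
  define d where "d = length w"
  have lj: "length j = length i + d"
    using arg_cong[OF u1, of length] arg_cong[OF u2, of length] by (simp add: d_def)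
  have d: "1 \<le> d" "d \<le> L"
    using \<open>w \<noteq> []\<close> lj \<open>length j \<le> L\<close> by (auto simp: d_def Suc_le_eq)
  have le: "length j \<le> length ?u - 1"
    using \<open>length j \<le> L\<close> by (simp add: length_probe_word)
  have "(j @ v) ! (length ?u - 1) = ?u ! (length ?u - 1)"
    unfolding u2 by (simp add: nth_append length_probe_word)
  moreover have "(j @ v) ! (length ?u - 1) = ?u ! (length ?u - 1 - d)"
  proof -
    have "(j @ v) ! (length ?u - 1) = v ! (length ?u - 1 - length j)"
      using le by (simp add: nth_append)
    also have "\<dots> = ?u ! (length i + (length ?u - 1 - length j))"
      unfolding u1 by (rule nth_append_length_plus[symmetric])
    also have "length i + (length ?u - 1 - length j) = length ?u - 1 - d"
      using le lj by simp
    finally show ?thesis .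
  qed
  ultimately show False
    using probe_word_last[of n L] probe_word_before_last[OF d, of n] by simp
qed

lemma compress_short_eq_Some_iff:
  assumes iL: "length i \<le> L" and jL: "length j \<le> L"
  shows "compress n L (i, j) = Some t \<longleftrightarrow> t = cu2_e \<and> i = j \<and> i = prefix_word n (length i)"
proof
  let ?u = "probe_word n L"
  assume "compress n L (i, j) = Some t"
  moreover have "\<nexists>w. i = ?u @ w"
    using iL by (auto simp: length_probe_word)
  ultimately obtain v where u1: "?u = i @ v" and t: "cu2_mult ([], j @ v) (?u, []) = Some t"
    by (auto simp: compress_def cu2_mult_def split: if_splits)
  have "?u = j @ v"
  proof (cases "\<exists>w. ?u = (j @ v) @ w")
    case True
    then obtain w where "?u = j @ v @ w" by auto
    with probe_word_suffix_no_repeat[OF u1 _ _ iL] show ?thesis by auto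
  next
    case False
    with t obtain w where "j @ v = ?u @ w"
      by (auto simp: cu2_mult_def split: if_splits)
    with probe_word_suffix_no_overhang[OF u1 _ _ jL] show ?thesis by auto
  qed
  then have "t = cu2_e"
    using t by (simp add: cu2_mult_def cu2_e_def)
  moreover have "i = j"
    using u1 \<open>?u = j @ v\<close> by simp
  moreover have "i = prefix_word n (length i)"
    using take_probe_word[OF iL, of n] u1 by simp
  ultimately show "t = cu2_e \<and> i = j \<and> i = prefix_word n (length i)"
    by blast
next
  assume h: "t = cu2_e \<and> i = j \<and> i = prefix_word n (length i)"
  define v where "v = drop (length i) (probe_word n L)"
  have "probe_word n L = i @ v" "v \<noteq> []"
    using take_probe_word[OF iL, of n] h iL unfolding v_def
    by (metis append_take_drop_id, simp add: length_probe_word)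
  then show "compress n L (i, j) = Some t"
    using h by (auto simp: compress_def cu2_mult_def cu2_e_def)
qed

definition cu2_box :: "nat \<Rightarrow> cu2 set" where
  "cu2_box L = {s. length (fst s) \<le> L \<and> length (snd s) \<le> L}"

lemma conv_compress:
  assumes "f summable_on UNIV"
  shows "conv (conv (delta ([], probe_word n L)) f) (delta (probe_word n L, [])) = pushforward (compress n L) f"
  unfolding conv_delta_left conv_delta_right
  by (rule ext, subst pushforward_pushforward[OF assms]) (simp add: compress_def[abs_def])

lemma diagonal_image_iff:
  "(i, j) \<in> (\<lambda>l. (prefix_word n l, prefix_word n l)) ` {..L}
   \<longleftrightarrow> length i \<le> L \<and> i = j \<and> i = prefix_word n (length i)"
  by (auto intro: image_eqI[where x = "length i"])

lemma pushforward_compress_box: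
  "pushforward (compress n L) (\<lambda>s. if s \<in> cu2_box L then f s else 0) t
   = (\<Sum>l\<le>L. f (prefix_word n l, prefix_word n l)) * delta cu2_e t"
proof -
  let ?D = "(\<lambda>l. (prefix_word n l, prefix_word n l)) ` {..L}"
  have "(if compress n L s = Some t then if s \<in> cu2_box L then f s else 0 else 0)
      = (if s \<in> ?D \<and> t = cu2_e then f s else 0)" for s
    by (cases s) (auto simp: cu2_box_def diagonal_image_iff compress_short_eq_Some_iff)
  then have "pushforward (compress n L) (\<lambda>s. if s \<in> cu2_box L then f s else 0) t
      = (\<Sum>\<^sub>\<infinity>s. if s \<in> ?D \<and> t = cu2_e then f s else 0)"
    unfolding pushforward_def by simp
  also have "\<dots> = (\<Sum>\<^sub>\<infinity>s\<in>?D. if t = cu2_e then f s else 0)"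
    by (rule infsum_cong_neutral) auto
  also have "\<dots> = (\<Sum>s\<in>?D. if t = cu2_e then f s else 0)"
    by (rule infsum_finite) simp
  also have "\<dots> = (\<Sum>l\<le>L. f (prefix_word n l, prefix_word n l)) * delta cu2_e t"
    by (subst sum.reindex) (auto simp: inj_on_def delta_def dest: arg_cong[where f = length])
  finally show ?thesis .
qed

lemma pushforward_compress:
  assumes "f summable_on UNIV"
  shows "pushforward (compress n L) f
    = (\<lambda>t. (\<Sum>l\<le>L. f (prefix_word n l, prefix_word n l)) * delta cu2_e t
           + pushforward (compress n L) (\<lambda>s. if s \<notin> cu2_box L then f s else 0) t)"
proof
  fix t
  have "pushforward (compress n L) f t
      = pushforward (compress n L) (\<lambda>s. (if s \<in> cu2_box L then f s else 0) + (if s \<notin> cu2_box L then f s else 0)) t"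
    by (rule arg_cong[where f = "\<lambda>F. pushforward (compress n L) F t"]) auto
  also have "\<dots> = pushforward (compress n L) (\<lambda>s. if s \<in> cu2_box L then f s else 0) t
        + pushforward (compress n L) (\<lambda>s. if s \<notin> cu2_box L then f s else 0) t"
    using assms by (intro pushforward_add summable_on_if_zero)
  finally show "pushforward (compress n L) f t
      = (\<Sum>l\<le>L. f (prefix_word n l, prefix_word n l)) * delta cu2_e t
        + pushforward (compress n L) (\<lambda>s. if s \<notin> cu2_box L then f s else 0) t"
    by (simp only: pushforward_compress_box)
qed

lemma eventually_l1_norm_outside_box_le:
  assumes f: "f summable_on UNIV" and "\<epsilon> > 0"
  shows "\<forall>\<^sub>F L in sequentially. l1_norm (\<lambda>s. if s \<notin> cu2_box L then f s else 0) \<le> \<epsilon>"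
proof -
  have nf: "(\<lambda>s. norm (f s)) summable_on UNIV"
    using f summable_on_iff_abs_summable_on_complex by blast
  obtain F where F: "finite F" and approx: "dist (sum (\<lambda>s. norm (f s)) F) (l1_norm f) \<le> \<epsilon>"
    using infsum_finite_approximation[OF nf \<open>\<epsilon> > 0\<close>] unfolding l1_norm_def by blast
  have split: "l1_norm f = sum (\<lambda>s. norm (f s)) F + infsum (\<lambda>s. norm (f s)) (- F)"
    using infsum_Un_disjoint[of "\<lambda>s. norm (f s)" F "- F"] F summable_on_subset_banach[OF nf]
    by (simp add: l1_norm_def)
  define M where "M = Max (insert 0 ((\<lambda>s. max (length (fst s)) (length (snd s))) ` F))"
  have "l1_norm (\<lambda>s. if s \<notin> cu2_box L then f s else 0) \<le> \<epsilon>" if "M \<le> L" for L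
  proof -
    have "F \<subseteq> cu2_box L"
      using F that Max_ge[of "insert 0 ((\<lambda>s. max (length (fst s)) (length (snd s))) ` F)"]
      by (fastforce simp: M_def cu2_box_def)
    then have "l1_norm (\<lambda>s. if s \<notin> cu2_box L then f s else 0) \<le> infsum (\<lambda>s. norm (f s)) (- F)"
      unfolding l1_norm_def
      using summable_on_if_zero[OF f] summable_on_subset_banach[OF nf, of "- F"]
      by (intro infsum_mono_neutral) (auto simp: summable_on_iff_abs_summable_on_complex)
    also have "\<dots> \<le> \<epsilon>"
      using approx split by (simp add: dist_real_def)
    finally show ?thesis .
  qed
  then show ?thesis
    unfolding eventually_sequentially by blast
qed

lemma summable_diagonal:
  fixes f :: "cu2 \<Rightarrow> complex"
  assumes "f summable_on UNIV"
  shows "summable (\<lambda>l. f (prefix_word n l, prefix_word n l))"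
proof -
  have inj: "inj (\<lambda>l. (prefix_word n l, prefix_word n l))"
    by (rule injI) (metis length_prefix_word prod.inject)
  have "f summable_on range (\<lambda>l. (prefix_word n l, prefix_word n l))"
    by (rule summable_on_subset_banach[OF assms]) simp
  then show ?thesis
    using summable_on_reindex[OF inj, of f] by (simp add: o_def summable_on_imp_summable)
qed

lemma in_A_iff_summable: "in_A f \<longleftrightarrow> f summable_on UNIV"
  by (simp add: in_A_def summable_on_iff_abs_summable_on_complex)

lemma compression_near_scalar:
  fixes f :: "cu2 \<Rightarrow> complex"
  assumes f: "f summable_on UNIV" and nonzero: "(\<Sum>l. f (prefix_word n l, prefix_word n l)) \<noteq> 0"
  obtains L c r where "r summable_on UNIV" "l1_norm r < norm c"
    "conv (conv (delta ([], probe_word n L)) f) (delta (probe_word n L, [])) = (\<lambda>t. c * delta cu2_e t + r t)"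
proof -
  define D where "D = (\<lambda>l. f (prefix_word n l, prefix_word n l))"
  define tail where "tail L = (\<lambda>s. if s \<notin> cu2_box L then f s else 0)" for L
  have pos: "norm (suminf D) > 0"
    using nonzero by (simp add: D_def)
  have "\<forall>\<^sub>F L in sequentially. dist (\<Sum>l\<le>L. D l) (suminf D) < norm (suminf D) / 3"
    using pos summable_LIMSEQ'[OF summable_diagonal[OF f, of n]] by (intro tendstoD) (simp_all add: D_def)
  moreover have "\<forall>\<^sub>F L in sequentially. l1_norm (tail L) \<le> norm (suminf D) / 3"
    unfolding tail_def using pos by (intro eventually_l1_norm_outside_box_le f) simp
  ultimately obtain L where near: "dist (\<Sum>l\<le>L. D l) (suminf D) < norm (suminf D) / 3"
    and small: "l1_norm (tail L) \<le> norm (suminf D) / 3"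
    using eventually_happens'[OF sequentially_bot eventually_conj] by auto
  have tail: "tail L summable_on UNIV"
    unfolding tail_def using f by (rule summable_on_if_zero)
  have "l1_norm (pushforward (compress n L) (tail L)) \<le> l1_norm (tail L)"
    using tail by (rule l1_norm_pushforward_le)
  also have "\<dots> < norm (\<Sum>l\<le>L. D l)"
    using near small norm_triangle_ineq3[of "suminf D" "\<Sum>l\<le>L. D l"]
    by (simp add: dist_norm norm_minus_commute)
  finally have "l1_norm (pushforward (compress n L) (tail L)) < norm (\<Sum>l\<le>L. D l)" .
  moreover have "conv (conv (delta ([], probe_word n L)) f) (delta (probe_word n L, []))
      = (\<lambda>t. (\<Sum>l\<le>L. D l) * delta cu2_e t + pushforward (compress n L) (tail L) t)"
    unfolding conv_compress[OF f] pushforward_compress[OF f] by (simp add: D_def tail_def)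
  ultimately show ?thesis
    by (rule that[OF pushforward_summable[OF tail]])
qed

theorem proposition3p6:
  fixes f :: "cu2 \<Rightarrow> complex"
  assumes "in_A f"
    and "\<exists>n :: nat \<Rightarrow> gen. (\<Sum>l. f (prefix_word n l, prefix_word n l)) \<noteq> 0"
  shows "\<exists>g h. in_A g \<and> in_A h \<and> (g #\<^sub>C f) #\<^sub>C h = delta cu2_e"
proof -
  have f: "f summable_on UNIV"
    using assms(1) by (simp add: in_A_iff_summable)
  obtain n where nonzero: "(\<Sum>l. f (prefix_word n l, prefix_word n l)) \<noteq> 0"
    using assms(2) by blast
  obtain L c r where r: "r summable_on UNIV" "l1_norm r < norm c"
    and compressed: "conv (conv (delta ([], probe_word n L)) f) (delta (probe_word n L, []))
                     = (\<lambda>t. c * delta cu2_e t + r t)"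
    by (rule compression_near_scalar[OF f nonzero])
  obtain y where y: "y summable_on UNIV" and inverse: "conv y (\<lambda>t. c * delta cu2_e t + r t) = delta cu2_e"
    using neumann_left_inverse[OF r] by blast
  let ?g = "conv y (delta ([], probe_word n L))" and ?h = "delta (probe_word n L, [])"
  have "conv (conv ?g f) ?h = conv (conv y (conv (delta ([], probe_word n L)) f)) ?h"
    by (simp only: conv_assoc[OF y delta_summable f])
  also have "\<dots> = conv y (conv (conv (delta ([], probe_word n L)) f) ?h)"
    by (rule conv_assoc[OF y conv_summable[OF delta_summable f] delta_summable])
  also have "\<dots> = delta cu2_e"
    unfolding compressed by (rule inverse)
  finally have "conv (conv ?g f) ?h = delta cu2_e" .
  moreover have "in_A ?g"
    unfolding in_A_iff_summable by (rule conv_summable[OF y delta_summable])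
  moreover have "in_A ?h"
    unfolding in_A_iff_summable by (rule delta_summable)
  ultimately show ?thesis
    by blast
qed

end
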